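(* Let $f_{\phi}:\mathbb{R}^D\to\mathbb{R}^H$ be the encoder of a Natural Posterior Network model, given by a neural network with piecewise (leaky) ReLU activations, so that $f_{\phi}$ is continuous and piecewise affine: there is a finite collection of affine regions $Q^{(1)},\dots,Q^{(R)}$ covering $\mathbb{R}^D$ such that $f_{\phi}(\mathbf{x}) = V^{(l)}\mathbf{x} + a^{(l)}$ for $\mathbf{x}\in Q^{(l)}$, with $V^{(l)}\in\mathbb{R}^{H\times D}$ and $a^{(l)}\in\mathbb{R}^H$. Suppose that every matrix $V^{(l)}$ has linearly independent rows. Let $\mathbb{P}(\mathbf{z}\mid\boldsymbol{\omega})$ be a probability density function on the latent space $\mathbb{R}^H$ which has bounded derivatives. Then for almost every $\mathbf{x}\in\mathbb{R}^D$, $$\mathbb{P}(f_{\phi}(\delta\cdot\mathbf{x})\mid\boldsymbol{\omega}) \longrightarrow 0 \quad\text{as } \delta\to\infty .$$ In particular, the predicted evidence $n(\delta\mathbf{x}) = N_H\,\mathbb{P}(f_{\phi}(\delta\mathbf{x})\mid\boldsymbol{\omega})$ (for any constant $N_H>0$) tends to $0$ as $\delta\to\infty$.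
   Context: A Natural Posterior Network consists of an encoder $f_{\phi}$ mapping an input $\mathbf{x}\in\mathbb{R}^D$ to a latent vector $\mathbf{z}=f_{\phi}(\mathbf{x})\in\mathbb{R}^H$, a decoder $g_{\psi}$ (which plays no role in this statement), and a normalized density $\mathbb{P}(\mathbf{z}\mid\boldsymbol{\omega})$ on $\mathbb{R}^H$ (e.g. a normalizing flow). For an input $\mathbf{x}$, the evidence (pseudo-count) is defined as $n = N_H\,\mathbb{P}(f_{\phi}(\mathbf{x})\mid\boldsymbol{\omega})$ with a fixed constant $N_H>0$ (the certainty budget). *)

theory Defs
  imports "HOL-Analysis.Analysis"
begin

definition lin_indep_rows :: "real^'d^'h \<Rightarrow> bool" where
  "lin_indep_rows V \<longleftrightarrow> inj (\<lambda>i. row i V) \<and> independent (range (\<lambda>i. row i V))"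

end

theory Submission imports Defs begin

text \<open>A bounded derivative makes the density Lipschitz, and a nonnegative integrable uniformly
  continuous function vanishes at infinity: a value \<open>P z \<ge> e\<close> far out would force
  \<open>P \<ge> e/2\<close> on a whole ball of fixed radius around \<open>z\<close>, i.e. a fixed amount of mass in a tail
  of \<open>P\<close>, whose integral tends to 0. On the other side, since each \<open>V l\<close> has a nonzero row,
  \<open>V l *v x \<noteq> 0\<close> for all \<open>l\<close> outside a finite union of hyperplanes; for such \<open>x\<close> every affine
  piece grows linearly along the ray \<open>\<delta> *\<^sub>R x\<close>, so \<open>f (\<delta> *\<^sub>R x)\<close> escapes to infinity.\<close>

lemma tendsto_integral_norm_tail:
  fixes f :: "'a::euclidean_space \<Rightarrow> 'b::{banach, second_countable_topology}"
  assumes f: "integrable lborel f"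
  shows "(\<lambda>n::nat. LINT z|lborel. indicator {z. real n \<le> norm z} z *\<^sub>R f z) \<longlonglongrightarrow> 0"
proof -
  have tail_sets: "{z::'a. real n \<le> norm z} \<in> sets lborel" for n
    by (simp add: closed_Collect_le borel_closed continuous_on_const continuous_on_norm_id)
  have "(\<lambda>n::nat. LINT z|lborel. indicator {z. real n \<le> norm z} z *\<^sub>R f z)
          \<longlonglongrightarrow> integral\<^sup>L lborel (\<lambda>z::'a. 0)"
  proof (rule Bochner_Integration.integral_dominated_convergence
      [where s="\<lambda>n z. indicator {z. real n \<le> norm z} z *\<^sub>R f z" and w="\<lambda>z. norm (f z)"])
    show "(\<lambda>z. indicator {z. real n \<le> norm z} z *\<^sub>R f z) \<in> borel_measurable lborel" for n
      using integrable_mult_indicator[OF tail_sets f] by auto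
    show "integrable lborel (\<lambda>z. norm (f z))"
      using f by simp
    show "AE z in lborel. (\<lambda>n. indicator {z. real n \<le> norm z} z *\<^sub>R f z) \<longlonglongrightarrow> 0"
    proof (rule AE_I2)
      fix z :: 'a
      obtain N :: nat where "norm z < N"
        using reals_Archimedean2 by blast
      then have "\<forall>n\<ge>N. indicator {z. real n \<le> norm z} z *\<^sub>R f z = 0"
        by (auto simp: indicator_def)
      then show "(\<lambda>n. indicator {z. real n \<le> norm z} z *\<^sub>R f z) \<longlonglongrightarrow> 0"
        by (intro tendsto_eventually) (auto simp: eventually_sequentially)
    qed
    show "AE z in lborel. norm (indicator {z. real n \<le> norm z} z *\<^sub>R f z) \<le> norm (f z)" for n
      by (auto simp: indicator_def)
  qed simp
  then show ?thesis
    by simp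
qed

lemma uniformly_continuous_integrable_tendsto_zero:
  fixes P :: "'a::euclidean_space \<Rightarrow> real"
  assumes nonneg: "\<And>z. 0 \<le> P z"
    and integrable: "integrable lborel P"
    and unif_cont: "uniformly_continuous_on UNIV P"
  shows "(P \<longlongrightarrow> 0) at_infinity"
proof (rule tendstoI)
  fix e :: real
  assume e: "e > 0"
  obtain r where r: "r > 0" and close: "\<And>z w. dist w z < r \<Longrightarrow> dist (P w) (P z) < e/2"
    using unif_cont e unfolding uniformly_continuous_on_def by (metis UNIV_I half_gt_zero)
  define c where "c = e/2 * measure lborel (ball (0::'a) r)"
  have "c > 0"
    using e r by (simp add: c_def)
  define tail where "tail n z = indicator {z. real n \<le> norm z} z *\<^sub>R P z" for n z
  have tail_integrable: "integrable lborel (tail n)" for n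
    unfolding tail_def
    by (rule integrable_mult_indicator[OF _ integrable])
       (simp add: closed_Collect_le borel_closed continuous_on_const continuous_on_norm_id)
  obtain n where n: "integral\<^sup>L lborel (tail n) < c"
    using tendsto_integral_norm_tail[OF integrable] \<open>c > 0\<close>
    unfolding tail_def by (metis (lifting) order_tendstoD(2) eventually_sequentially order_refl)
  have "dist (P z) 0 < e" if far: "real n + r \<le> norm z" for z
  proof (rule ccontr)
    assume "\<not> dist (P z) 0 < e"
    then have Pz: "P z \<ge> e"
      using nonneg[of z] by simp
    have bump_below_tail: "e/2 * indicator (ball z r) w \<le> tail n w" for w
    proof (cases "w \<in> ball z r")
      case True
      then have "real n \<le> norm w"
        using far norm_triangle_sub[of z w] by (simp add: dist_norm)
      moreover have "dist (P w) (P z) < e/2"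
        using close[of z w] True by (simp add: dist_commute)
      then have "P w \<ge> e/2"
        using Pz unfolding dist_real_def abs_less_iff by linarith
      ultimately show ?thesis
        using True by (simp add: tail_def)
    qed (simp add: tail_def nonneg)
    have bump_integrable: "integrable lborel (\<lambda>w. e/2 * indicator (ball z r) w :: real)"
      using emeasure_bounded_finite[OF bounded_ball, of z r]
      by (intro integrable_mult_right integrable_real_indicator) (auto simp: less_top)
    have "c = integral\<^sup>L lborel (\<lambda>w. e/2 * indicator (ball z r) w :: real)"
      using content_ball[of r z] content_ball[of r "0::'a"] r by (simp add: c_def)
    also have "\<dots> \<le> integral\<^sup>L lborel (tail n)"
      by (rule integral_mono[OF bump_integrable tail_integrable bump_below_tail])
    finally show False
      using n by linarith
  qed
  then show "\<forall>\<^sub>F z in at_infinity. dist (P z) 0 < e"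
    unfolding eventually_at_infinity by blast
qed

lemma lipschitz_on_bounded_derivative:
  fixes f :: "'a::real_normed_vector \<Rightarrow> 'b::real_normed_vector"
  assumes deriv: "\<And>x. (f has_derivative f' x) (at x)"
    and bounded: "\<And>x. onorm (f' x) \<le> B"
  shows "B-lipschitz_on UNIV f"
proof (rule lipschitz_onI)
  show "dist (f x) (f y) \<le> B * dist x y" for x y
    using differentiable_bound[of UNIV f f' B x y] deriv bounded by (simp add: dist_norm)
  show "0 \<le> B"
    using onorm_pos_le[OF has_derivative_bounded_linear[OF deriv]] bounded order_trans by blast
qed

lemma AE_lborel_inner_nonzero:
  fixes a :: "'a::euclidean_space"
  assumes "a \<noteq> 0"
  shows "AE x in lborel. a \<bullet> x \<noteq> 0"
proof (rule AE_I')
  have "negligible {x. a \<bullet> x = 0}"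
    using assms by (intro negligible_hyperplane) simp
  then show "{x. a \<bullet> x = 0} \<in> null_sets lborel"
    by (simp add: negligible_iff_null_sets null_sets_completion_iff closed_hyperplane borel_closed)
qed auto

lemma AE_lborel_matrix_vector_mult_nonzero:
  fixes V :: "real^'d^'h"
  assumes "lin_indep_rows V"
  shows "AE x in lborel. V *v x \<noteq> 0"
proof -
  fix i :: 'h
  have "V $ i \<noteq> 0"
  proof
    assume "V $ i = 0"
    then have "0 \<in> range (\<lambda>i. row i V)"
      by (metis rangeI row_def vec_lambda_eta)
    with assms show False
      by (auto simp: lin_indep_rows_def dependent_zero)
  qed
  then have "AE x in lborel. V $ i \<bullet> x \<noteq> 0"
    by (rule AE_lborel_inner_nonzero)
  then show ?thesis
    by (rule eventually_mono) (auto simp: matrix_vector_mul_component vec_eq_iff)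
qed

lemma piecewise_affine_ray_tendsto_infinity:
  fixes f :: "'a::real_normed_vector \<Rightarrow> 'b::real_normed_vector"
  assumes finite: "finite I"
    and cover: "(\<Union>l\<in>I. Q l) = UNIV"
    and pieces: "\<And>l y. l \<in> I \<Longrightarrow> y \<in> Q l \<Longrightarrow> f y = A l y + a l"
    and linear: "\<And>l. l \<in> I \<Longrightarrow> linear (A l)"
    and nonzero: "\<And>l. l \<in> I \<Longrightarrow> A l x \<noteq> 0"
  shows "filterlim (\<lambda>\<delta>. f (\<delta> *\<^sub>R x)) at_infinity at_top"
proof -
  have "I \<noteq> {}"
    using cover by auto
  define c where "c = Min ((\<lambda>l. norm (A l x)) ` I)"
  define M where "M = Max ((\<lambda>l. norm (a l)) ` I)"
  have "c > 0"
    unfolding c_def using finite \<open>I \<noteq> {}\<close> nonzero by (subst Min_gr_iff) auto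
  have linear_growth: "\<delta> * c - M \<le> norm (f (\<delta> *\<^sub>R x))" if "\<delta> \<ge> 0" for \<delta>
  proof -
    obtain l where l: "l \<in> I" "\<delta> *\<^sub>R x \<in> Q l"
      using cover by blast
    have "\<delta> * c \<le> \<delta> * norm (A l x)"
      unfolding c_def using finite l \<open>\<delta> \<ge> 0\<close> by (intro mult_left_mono Min_le) auto
    moreover have "norm (a l) \<le> M"
      unfolding M_def using finite l by (intro Max_ge) auto
    moreover have "\<delta> *\<^sub>R x \<in> Q l \<Longrightarrow> f (\<delta> *\<^sub>R x) = \<delta> *\<^sub>R A l x + a l"
      using pieces[OF l(1)] linear_scale[OF linear[OF l(1)]] by simp
    moreover have "\<delta> * norm (A l x) \<le> norm (\<delta> *\<^sub>R A l x + a l) + norm (a l)"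
      using norm_triangle_ineq4[of "\<delta> *\<^sub>R A l x + a l" "a l"] \<open>\<delta> \<ge> 0\<close> by simp
    ultimately show ?thesis
      using l(2) by fastforce
  qed
  have "filterlim (\<lambda>\<delta>. \<delta> * c - M) at_top at_top"
    using filterlim_tendsto_add_at_top[OF tendsto_const[of "-M"]
        filterlim_at_top_mult_tendsto_pos[OF tendsto_const \<open>c > 0\<close> filterlim_ident]]
    by simp
  then have "filterlim (\<lambda>\<delta>. norm (f (\<delta> *\<^sub>R x))) at_top at_top"
    by (rule filterlim_at_top_mono) (use linear_growth eventually_ge_at_top in \<open>blast intro: eventually_mono\<close>)
  then show ?thesis
    by (simp add: filterlim_at_infinity_conv_norm_at_top)
qed

theorem theorem1:
  fixes f :: "real^'d \<Rightarrow> real^'h"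
    and R :: nat
    and Q :: "nat \<Rightarrow> (real^'d) set"
    and V :: "nat \<Rightarrow> real^'d^'h"
    and a :: "nat \<Rightarrow> real^'h"
    and P :: "real^'h \<Rightarrow> real"
    and P' :: "real^'h \<Rightarrow> real^'h \<Rightarrow> real"
  assumes f_cont: "continuous_on UNIV f"
    and cover: "(\<Union>l<R. Q l) = UNIV"
    and affine_pieces: "\<forall>l<R. \<forall>x\<in>Q l. f x = V l *v x + a l"
    and rows_indep: "\<forall>l<R. lin_indep_rows (V l)"
    and P_nonneg: "\<forall>z. 0 \<le> P z"
    and P_integrable: "integrable lborel P"
    and P_normalized: "integral\<^sup>L lborel P = 1"
    and P_deriv: "\<forall>z. (P has_derivative P' z) (at z)"
    and P_deriv_bounded: "\<exists>B. \<forall>z. onorm (P' z) \<le> B"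
  shows "AE x in lborel.
           ((\<lambda>\<delta>. P (f (\<delta> *\<^sub>R x))) \<longlongrightarrow> 0) at_top \<and>
           (\<forall>N_H::real. N_H > 0 \<longrightarrow> ((\<lambda>\<delta>. N_H * P (f (\<delta> *\<^sub>R x))) \<longlongrightarrow> 0) at_top)"
proof -
  obtain B where "\<And>z. onorm (P' z) \<le> B"
    using P_deriv_bounded by blast
  then have "B-lipschitz_on UNIV P"
    using P_deriv by (intro lipschitz_on_bounded_derivative) auto
  then have P_vanishes: "(P \<longlongrightarrow> 0) at_infinity"
    using P_nonneg P_integrable lipschitz_on_uniformly_continuous
    by (intro uniformly_continuous_integrable_tendsto_zero) auto
  have "AE x in lborel. \<forall>l\<in>{..<R}. V l *v x \<noteq> 0"
    using rows_indep AE_lborel_matrix_vector_mult_nonzero by (intro AE_finite_allI) auto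
  then show ?thesis
  proof (rule AE_mp[OF _ AE_I2], intro impI)
    fix x
    assume "\<forall>l\<in>{..<R}. V l *v x \<noteq> 0"
    then have "filterlim (\<lambda>\<delta>. f (\<delta> *\<^sub>R x)) at_infinity at_top"
      using cover affine_pieces
      by (intro piecewise_affine_ray_tendsto_infinity[where A="\<lambda>l. (*v) (V l)" and Q=Q and a=a])
         (auto simp: matrix_vector_mul_linear)
    then have "((\<lambda>\<delta>. P (f (\<delta> *\<^sub>R x))) \<longlongrightarrow> 0) at_top"
      by (rule filterlim_compose[OF P_vanishes])
    then show "((\<lambda>\<delta>. P (f (\<delta> *\<^sub>R x))) \<longlongrightarrow> 0) at_top \<and>
        (\<forall>N_H::real. N_H > 0 \<longrightarrow> ((\<lambda>\<delta>. N_H * P (f (\<delta> *\<^sub>R x))) \<longlongrightarrow> 0) at_top)"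
      using tendsto_mult_right_zero by blast
  qed
qed

end
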